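(* Let $N\ge 2$, let $e_{ij}\ge 0$ ($1\le i,j\le N$) be nonnegative similarity weights, let $a\in\{0,1\}^N$ be a treatment assignment, and let $y_1,\dots,y_N\in[0,1]$. Write $d_i=\sum_j e_{ij}$, $d_{\min}=\min_i d_i$, $e_{\mathrm{sum}}=\sum_{i,j}e_{ij}$, and $d_i(\mathrm{cut})=\sum_j \mathbb{1}(a_i\neq a_j)e_{ij}$, and assume $d_i(\mathrm{cut})>0$ for every $i$ (so that $d_i>0$ and $d_{\min}>0$). Define the counterfactual imputation weights $w_{ij}=\frac{\mathbb{1}(a_i\neq a_j)e_{ij}}{\sum_k \mathbb{1}(a_i\neq a_k)e_{ik}}$ and the oracle residuals $\epsilon_i=\left|y_i-\frac{\sum_j e_{ij}y_j}{d_i}\right|$. Then $$\sum_{i=1}^N\Big|\sum_{j} w_{ij}y_j-y_i\Big|\;\le\;\sum_{i=1}^N\epsilon_i+\frac{e_{\mathrm{sum}}-\sum_{i,j}\mathbb{1}(a_i\neq a_j)e_{ij}}{d_{\min}},$$ where all sums over $i,j$ range over ordered pairs in $\{1,\dots,N\}^2$.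
   Context: Units $i=1,\dots,N$ have covariates with pairwise similarities $e_{ij}$; $a_i=1$ denotes treatment and $a_i=0$ control. The quantity $\sum_j w_{ij}y_j$ is the estimate of unit $i$'s unobserved potential outcome obtained as a similarity-weighted average of the outcomes of units in the opposite treatment group. *)

theory Defs
  imports Main "HOL.Real"
begin

(* Units are indexed by {..<N} (0-based). e i j = similarity e_ij, a i = treatment indicator a_i \<in> {0,1}. *)

definition ind :: "bool \<Rightarrow> real" where
  "ind b = (if b then 1 else 0)"

definition deg :: "nat \<Rightarrow> (nat \<Rightarrow> nat \<Rightarrow> real) \<Rightarrow> nat \<Rightarrow> real" where
  "deg N e i = (\<Sum>j<N. e i j)"

definition dmin :: "nat \<Rightarrow> (nat \<Rightarrow> nat \<Rightarrow> real) \<Rightarrow> real" where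
  "dmin N e = Min ((\<lambda>i. deg N e i) ` {..<N})"

definition esum :: "nat \<Rightarrow> (nat \<Rightarrow> nat \<Rightarrow> real) \<Rightarrow> real" where
  "esum N e = (\<Sum>i<N. \<Sum>j<N. e i j)"

definition dcut :: "nat \<Rightarrow> (nat \<Rightarrow> nat \<Rightarrow> real) \<Rightarrow> (nat \<Rightarrow> bool) \<Rightarrow> nat \<Rightarrow> real" where
  "dcut N e a i = (\<Sum>j<N. ind (a i \<noteq> a j) * e i j)"

definition wgt :: "nat \<Rightarrow> (nat \<Rightarrow> nat \<Rightarrow> real) \<Rightarrow> (nat \<Rightarrow> bool) \<Rightarrow> nat \<Rightarrow> nat \<Rightarrow> real" where
  "wgt N e a i j = ind (a i \<noteq> a j) * e i j / (\<Sum>k<N. ind (a i \<noteq> a k) * e i k)"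

definition resid :: "nat \<Rightarrow> (nat \<Rightarrow> nat \<Rightarrow> real) \<Rightarrow> (nat \<Rightarrow> real) \<Rightarrow> nat \<Rightarrow> real" where
  "resid N e y i = \<bar>y i - (\<Sum>j<N. e i j * y j) / deg N e i\<bar>"

end

theory Submission
  imports Defs
begin

text \<open>For each unit, split the row e_ij into its cut part (opposite treatment) and its
within part. The imputation is the e-weighted mean of y over the cut part alone and the
oracle prediction is the mean over the whole row; for y \<in> [0,1] these two means differ
by at most the within-group fraction (d_i - d_i(cut)) / d_i \<le> (d_i - d_i(cut)) / d_min.
The triangle inequality through the oracle prediction and summing over i give the bound,
since the within-group masses add up to e_sum - \<Sum>_ij 1(a_i \<noteq> a_j) e_ij.\<close>

lemma abs_div_sub_add_div_add_le:
  fixes S U c u :: real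
  assumes "c > 0" "u \<ge> 0" "0 \<le> S" "S \<le> c" "0 \<le> U" "U \<le> u"
  shows "\<bar>S / c - (S + U) / (c + u)\<bar> \<le> u / (c + u)"
proof -
  have denom_pos: "c * (c + u) > 0" using assms by simp
  have diff_eq: "S / c - (S + U) / (c + u) = (S * u - c * U) / (c * (c + u))"
    using assms by (simp add: diff_frac_eq algebra_simps)
  have "S * u \<le> c * u" "c * U \<le> c * u"
    using assms by (simp_all add: mult_right_mono mult_left_mono)
  moreover have "0 \<le> S * u" "0 \<le> c * U" using assms by simp_all
  ultimately have numer_le: "\<bar>S * u - c * U\<bar> \<le> c * u" by linarith
  have "\<bar>S / c - (S + U) / (c + u)\<bar> = \<bar>S * u - c * U\<bar> / (c * (c + u))"
    unfolding diff_eq using denom_pos by (simp add: abs_divide)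
  also have "\<dots> \<le> c * u / (c * (c + u))"
    using numer_le denom_pos by (intro divide_right_mono) simp_all
  also have "\<dots> = u / (c + u)" using assms by simp
  finally show ?thesis .
qed

lemma abs_partial_mean_sub_mean_le:
  fixes p q y :: "'a \<Rightarrow> real"
  assumes "\<And>j. j \<in> A \<Longrightarrow> p j \<ge> 0" "\<And>j. j \<in> A \<Longrightarrow> q j \<ge> 0"
    and "\<And>j. j \<in> A \<Longrightarrow> 0 \<le> y j \<and> y j \<le> 1"
    and "(\<Sum>j\<in>A. p j) > 0"
  shows "\<bar>(\<Sum>j\<in>A. p j * y j) / (\<Sum>j\<in>A. p j)
            - (\<Sum>j\<in>A. (p j + q j) * y j) / (\<Sum>j\<in>A. p j + q j)\<bar>
         \<le> (\<Sum>j\<in>A. q j) / (\<Sum>j\<in>A. p j + q j)"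
proof -
  have "0 \<le> (\<Sum>j\<in>A. p j * y j)" "(\<Sum>j\<in>A. p j * y j) \<le> (\<Sum>j\<in>A. p j)"
    "0 \<le> (\<Sum>j\<in>A. q j * y j)" "(\<Sum>j\<in>A. q j * y j) \<le> (\<Sum>j\<in>A. q j)"
    "0 \<le> (\<Sum>j\<in>A. q j)"
    using assms(1-3)
    by (auto intro!: sum_nonneg sum_mono simp: mult_left_le)
  from abs_div_sub_add_div_add_le[OF assms(4) this(5,1,2,3,4)] show ?thesis
    by (simp add: sum.distrib distrib_right)
qed

lemma deg_eq_dcut_add_within:
  "deg N e i = dcut N e a i + (\<Sum>j<N. ind (a i = a j) * e i j)"
  unfolding deg_def dcut_def sum.distrib[symmetric]
  by (rule sum.cong) (auto simp: ind_def)

lemma dcut_le_deg: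
  assumes "\<And>j. j < N \<Longrightarrow> e i j \<ge> 0"
  shows "dcut N e a i \<le> deg N e i"
  unfolding deg_eq_dcut_add_within[of N e i a] using assms
  by (auto intro!: sum_nonneg simp: ind_def)

lemma imputation_error_le:
  assumes "\<And>j. j < N \<Longrightarrow> e i j \<ge> 0"
    and "\<And>j. j < N \<Longrightarrow> 0 \<le> y j \<and> y j \<le> 1"
    and "i < N" "dcut N e a i > 0"
  shows "\<bar>(\<Sum>j<N. wgt N e a i j * y j) - y i\<bar>
           \<le> resid N e y i + (deg N e i - dcut N e a i) / deg N e i"
proof -
  define p where "p j = ind (a i \<noteq> a j) * e i j" for j
  define q where "q j = ind (a i = a j) * e i j" for j
  have pq: "p j + q j = e i j" for j
    unfolding p_def q_def by (simp add: ind_def)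
  have sum_p: "(\<Sum>j<N. p j) = dcut N e a i"
    unfolding p_def dcut_def ..
  have sum_q: "(\<Sum>j<N. q j) = deg N e i - dcut N e a i"
    unfolding q_def deg_eq_dcut_add_within[of N e i a] by simp
  have sum_pq: "(\<Sum>j<N. p j + q j) = deg N e i"
    unfolding pq deg_def ..
  have p_pos: "(\<Sum>j<N. p j) > 0"
    unfolding sum_p using assms(4) .
  have "\<bar>(\<Sum>j<N. p j * y j) / (\<Sum>j<N. p j)
           - (\<Sum>j<N. (p j + q j) * y j) / (\<Sum>j<N. p j + q j)\<bar>
          \<le> (\<Sum>j<N. q j) / (\<Sum>j<N. p j + q j)"
    by (rule abs_partial_mean_sub_mean_le[OF _ _ _ p_pos])
      (use assms in \<open>auto simp: p_def q_def ind_def\<close>)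
  then have "\<bar>(\<Sum>j<N. p j * y j) / (\<Sum>j<N. p j) - (\<Sum>j<N. e i j * y j) / deg N e i\<bar>
          \<le> (deg N e i - dcut N e a i) / deg N e i"
    unfolding sum_pq sum_q unfolding pq .
  moreover have "(\<Sum>j<N. wgt N e a i j * y j) = (\<Sum>j<N. p j * y j) / (\<Sum>j<N. p j)"
    unfolding wgt_def p_def by (simp add: sum_divide_distrib)
  ultimately show ?thesis
    unfolding resid_def by linarith
qed

lemma dmin_le_deg: "i < N \<Longrightarrow> dmin N e \<le> deg N e i"
  unfolding dmin_def by (intro Min_le) auto

lemma dmin_pos:
  assumes "N > 0" "\<And>i. i < N \<Longrightarrow> deg N e i > 0"
  shows "dmin N e > 0"
  unfolding dmin_def using assms by (subst Min_gr_iff) auto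

lemma esum_sub_cut_eq_sum_within:
  "esum N e - (\<Sum>i<N. \<Sum>j<N. ind (a i \<noteq> a j) * e i j) = (\<Sum>i<N. deg N e i - dcut N e a i)"
  unfolding esum_def deg_def dcut_def by (simp add: sum_subtractf)

theorem proposition2:
  fixes N :: nat and e :: "nat \<Rightarrow> nat \<Rightarrow> real" and a :: "nat \<Rightarrow> bool" and y :: "nat \<Rightarrow> real"
  assumes "N \<ge> 2"
    and "\<And>i j. i < N \<Longrightarrow> j < N \<Longrightarrow> e i j \<ge> 0"
    and "\<And>i. i < N \<Longrightarrow> 0 \<le> y i \<and> y i \<le> 1"
    and "\<And>i. i < N \<Longrightarrow> dcut N e a i > 0"
  shows "(\<Sum>i<N. \<bar>(\<Sum>j<N. wgt N e a i j * y j) - y i\<bar>)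
           \<le> (\<Sum>i<N. resid N e y i)
              + (esum N e - (\<Sum>i<N. \<Sum>j<N. ind (a i \<noteq> a j) * e i j)) / dmin N e"
proof -
  have within_nonneg: "deg N e i - dcut N e a i \<ge> 0" if "i < N" for i
    using dcut_le_deg[of N e i a] assms(2) that by simp
  have deg_pos: "deg N e i > 0" if "i < N" for i
    using within_nonneg[OF that] assms(4)[OF that] by linarith
  have dmin: "dmin N e > 0"
    using assms(1) deg_pos by (intro dmin_pos) auto
  have "(\<Sum>i<N. \<bar>(\<Sum>j<N. wgt N e a i j * y j) - y i\<bar>)
          \<le> (\<Sum>i<N. resid N e y i + (deg N e i - dcut N e a i) / dmin N e)"
  proof (rule sum_mono)
    fix i assume i: "i \<in> {..<N}"
    then have "(deg N e i - dcut N e a i) / deg N e i \<le> (deg N e i - dcut N e a i) / dmin N e"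
      using within_nonneg deg_pos dmin dmin_le_deg by (intro divide_left_mono) auto
    with i show "\<bar>(\<Sum>j<N. wgt N e a i j * y j) - y i\<bar>
                   \<le> resid N e y i + (deg N e i - dcut N e a i) / dmin N e"
      using imputation_error_le[of N e i y a] assms by force
  qed
  also have "\<dots> = (\<Sum>i<N. resid N e y i)
                   + (esum N e - (\<Sum>i<N. \<Sum>j<N. ind (a i \<noteq> a j) * e i j)) / dmin N e"
    unfolding esum_sub_cut_eq_sum_within by (simp add: sum.distrib sum_divide_distrib)
  finally show ?thesis .
qed

end
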